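(* Let $\Delta$ be a finite, flag, simply connected simplicial complex, and let $H_\Delta$, $q$, $T$, $p_n$, $p$ and $\theta$ be as described in the context. For all $e\in\mathrm{Edge}(\Delta)$ and $n\in\mathbb{Z}$ the following equalities hold in $H_\Delta$: (i) $\theta(e)=p(q,\iota e)\,e\,p(q,\iota e)^{-1}=p(q,\iota e)\,e^2\,p(\tau e,q)=p(q,\iota e)\,e^2\,p(q,\tau e)^{-1}$; (ii) $\theta(e^n)=p(q,\iota e)\,e^n\,p(\iota e,q)=p(q,\iota e)\,e^{n+1}\,p(\tau e,q)=p(q,\iota e)\,e^{n+1}\,p(q,\tau e)^{-1}$; (iii) if $e_1\cdot\ldots\cdot e_l$ is a combinatorial path then $\theta(e_1^n\cdots e_l^n)=p(q,\iota e_1)\,e_1^{n+1}\cdots e_l^{n+1}\,p(\tau e_l,q)$; (iv) $\theta^{-1}(e)=p_{-1}(q,\iota e)\,p_{-1}(\tau e,q)=p_{-1}(q,\iota e)\,e\,p_{-1}(\iota e,q)=p_{-1}(q,\iota e)\,e\,p_{-1}(q,\iota e)^{-1}$; (v) $\theta^{-1}(e^n)=p_{-1}(q,\iota e)\,e^n\,p_{-1}(\iota e,q)=p_{-1}(q,\iota e)\,e^{n-1}\,p_{-1}(\tau e,q)=p_{-1}(q,\iota e)\,e^{n-1}\,p_{-1}(q,\tau e)^{-1}$; (vi) if $e_1\cdot\ldots\cdot e_l$ is a combinatorial path then $\theta^{-1}(e_1^n\cdots e_l^n)=p_{-1}(q,\iota e_1)\,e_1^{n-1}\cdots e_l^{n-1}\,p_{-1}(\tau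 e_l,q)$; (vii) for all $k\in\mathbb{Z}$, $\theta^k(e)=p_k(q,\iota e)\,e^{k+1}\,p_k(\tau e,q)$.
   Context: $\mathrm{Edge}(\Delta)$ is the set of directed edges of $\Delta$ (each 1-simplex gives two); for $e\in\mathrm{Edge}(\Delta)$, $\iota e$ and $\tau e$ are its initial and terminal vertices and $\overline{e}$ is $e$ with reversed orientation. Directed edges $e_1,\dots,e_l$ form a combinatorial path $e_1\cdot\ldots\cdot e_l$ if $\tau e_i=\iota e_{i+1}$ for all $i$, and a combinatorial 1-cycle if moreover $\tau e_l=\iota e_1$. The Bestvina–Brady group $H_\Delta$ (kernel of the map from the right-angled Artin group of $\Delta$ to $\mathbb{Z}$ sending every standard generator to a fixed generator) is presented by $\mathcal{P}_H=\langle \mathrm{Edge}(\Delta)\mid \mathcal{R}_H\rangle$, where $\mathcal{R}_H$ consists of the words $e\overline{e}$ for $e\in\mathrm{Edge}(\Delta)$ and the words $efg$ and $e^{-1}f^{-1}g^{-1}$ for every combinatorial 1-cycle $e\cdot f\cdot g$. Fix a vertex $q$ and a spanning tree $T$ of the 1-skeleton of $\Delta$. For $n\in\mathbb{Z}$ and vertices $u,v$, $p_n(u,v)$ denotes $e_1^n\cdots e_l^n$ where $e_1\cdot\ldots\cdot e_l$ is the unique geodesic combinatorial path in $T$ from $u$ to $v$, and $p(u,v)=p_1(u,v)$. For $e\in\mathrm{Edge}(\Delta)$ let $w_e=p(q,\iota e)\,e\,p(\iota e,q)$; it is known that $e\mapsto w_e$ defines an automorphism $\theta$ of $H_\Delta$.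 *)

theory Defs
  imports "HOL-Algebra.Algebra"
begin

text \<open>Directed edges are ordered pairs (u,v) with u, v distinct
  and {u,v} a 1-simplex; the initial vertex is fst, the terminal vertex is snd.\<close>

definition simplicial_complex :: "'v set set \<Rightarrow> bool" where
  "simplicial_complex \<Delta> \<longleftrightarrow> finite \<Delta> \<and> (\<forall>s\<in>\<Delta>. finite s \<and> s \<noteq> {}) \<and>
     (\<forall>s\<in>\<Delta>. \<forall>t. t \<subseteq> s \<and> t \<noteq> {} \<longrightarrow> t \<in> \<Delta>)"

definition vertices :: "'v set set \<Rightarrow> 'v set" where
  "vertices \<Delta> = \<Union>\<Delta>"

definition flag :: "'v set set \<Rightarrow> bool" where
  "flag \<Delta> \<longleftrightarrow> (\<forall>S. finite S \<and> S \<noteq> {} \<and> S \<subseteq> vertices \<Delta> \<and>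
      (\<forall>u\<in>S. \<forall>v\<in>S. u \<noteq> v \<longrightarrow> {u, v} \<in> \<Delta>) \<longrightarrow> S \<in> \<Delta>)"

definition one_skel :: "'v set set \<Rightarrow> 'v set set" where
  "one_skel \<Delta> = {s \<in> \<Delta>. card s = 2}"

definition edges :: "'v set set \<Rightarrow> ('v \<times> 'v) set" where
  "edges \<Delta> = {(u, v). u \<noteq> v \<and> {u, v} \<in> \<Delta>}"

definition rev_edge :: "'v \<times> 'v \<Rightarrow> 'v \<times> 'v" where
  "rev_edge e = (snd e, fst e)"

fun walk :: "'v set set \<Rightarrow> 'v \<Rightarrow> 'v \<Rightarrow> ('v \<times> 'v) list \<Rightarrow> bool" where
  "walk G u v [] = (u = v)"
| "walk G u v ((a, b) # es) = (a = u \<and> a \<noteq> b \<and> {a, b} \<in> G \<and> walk G b v es)"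

definition cpath :: "'v set set \<Rightarrow> ('v \<times> 'v) list \<Rightarrow> bool" where
  "cpath \<Delta> es \<longleftrightarrow> es \<noteq> [] \<and> set es \<subseteq> edges \<Delta> \<and>
     (\<forall>i. Suc i < length es \<longrightarrow> snd (es ! i) = fst (es ! Suc i))"

text \<open>Edge-path equivalence (homotopy of edge paths with fixed endpoints x, y):
  generated by cancelling a backtrack e . rev e and by replacing two sides of a
  2-simplex by the third side.\<close>

inductive ep_eq :: "'v set set \<Rightarrow> 'v \<Rightarrow> 'v \<Rightarrow> ('v \<times> 'v) list \<Rightarrow> ('v \<times> 'v) list \<Rightarrow> bool"
  for \<Delta> x y where
  ep_refl: "walk (one_skel \<Delta>) x y es \<Longrightarrow> ep_eq \<Delta> x y es es"
| ep_sym: "ep_eq \<Delta> x y es es' \<Longrightarrow> ep_eq \<Delta> x y es' es"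
| ep_trans: "ep_eq \<Delta> x y es es' \<Longrightarrow> ep_eq \<Delta> x y es' es'' \<Longrightarrow> ep_eq \<Delta> x y es es''"
| ep_back: "walk (one_skel \<Delta>) x y (u @ [e, rev_edge e] @ w) \<Longrightarrow>
     ep_eq \<Delta> x y (u @ [e, rev_edge e] @ w) (u @ w)"
| ep_tri: "walk (one_skel \<Delta>) x y (u @ [(a, b), (b, c)] @ w) \<Longrightarrow> {a, b, c} \<in> \<Delta> \<Longrightarrow>
     card {a, b, c} = 3 \<Longrightarrow> ep_eq \<Delta> x y (u @ [(a, b), (b, c)] @ w) (u @ [(a, c)] @ w)"

text \<open>Simply connected: nonempty, connected, and trivial edge-path group
  (which is isomorphic to the fundamental group of the geometric realisation).\<close>

definition simply_connected :: "'v set set \<Rightarrow> bool" where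
  "simply_connected \<Delta> \<longleftrightarrow> vertices \<Delta> \<noteq> {} \<and>
     (\<forall>u\<in>vertices \<Delta>. \<forall>v\<in>vertices \<Delta>. \<exists>es. walk (one_skel \<Delta>) u v es) \<and>
     (\<forall>x\<in>vertices \<Delta>. \<forall>es. walk (one_skel \<Delta>) x x es \<longrightarrow> ep_eq \<Delta> x x es [])"

definition spanning_tree :: "'v set set \<Rightarrow> 'v set set \<Rightarrow> bool" where
  "spanning_tree \<Delta> T \<longleftrightarrow> T \<subseteq> one_skel \<Delta> \<and>
     (\<forall>u\<in>vertices \<Delta>. \<forall>v\<in>vertices \<Delta>. \<exists>es. walk T u v es) \<and>
     (\<forall>s\<in>T. \<forall>a b. s = {a, b} \<longrightarrow> \<not> (\<exists>es. walk (T - {s}) a b es))"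

definition tree_path :: "'v set set \<Rightarrow> 'v \<Rightarrow> 'v \<Rightarrow> ('v \<times> 'v) list" where
  "tree_path T u v = (THE es. walk T u v es \<and> (\<forall>es'. walk T u v es' \<longrightarrow> length es \<le> length es'))"

type_synonym 'a word = "('a \<times> bool) list"

definition word_on :: "'a set \<Rightarrow> 'a word \<Rightarrow> bool" where
  "word_on S w \<longleftrightarrow> set (map fst w) \<subseteq> S"

text \<open>Equality in the group \<langle>S | R\<rangle>: the congruence on words over S generated by free
  cancellation and by deleting relators. (x, True) is x, (x, False) is x^-1.\<close>

inductive pres_eq :: "'a set \<Rightarrow> 'a word set \<Rightarrow> 'a word \<Rightarrow> 'a word \<Rightarrow> bool" for S R where
  pe_refl: "word_on S w \<Longrightarrow> pres_eq S R w w"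
| pe_sym: "pres_eq S R w w' \<Longrightarrow> pres_eq S R w' w"
| pe_trans: "pres_eq S R w w' \<Longrightarrow> pres_eq S R w' w'' \<Longrightarrow> pres_eq S R w w''"
| pe_cancel: "word_on S u \<Longrightarrow> word_on S v \<Longrightarrow> x \<in> S \<Longrightarrow>
     pres_eq S R (u @ [(x, b), (x, \<not> b)] @ v) (u @ v)"
| pe_rel: "word_on S u \<Longrightarrow> word_on S v \<Longrightarrow> r \<in> R \<Longrightarrow> word_on S r \<Longrightarrow>
     pres_eq S R (u @ r @ v) (u @ v)"

definition pres_class :: "'a set \<Rightarrow> 'a word set \<Rightarrow> 'a word \<Rightarrow> 'a word set" where
  "pres_class S R w = {v. pres_eq S R w v}"

definition presented_group :: "'a set \<Rightarrow> 'a word set \<Rightarrow> 'a word set monoid" where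
  "presented_group S R =
     \<lparr>carrier = pres_class S R ` {w. word_on S w},
      monoid.mult = (\<lambda>A B. pres_class S R ((SOME a. a \<in> A) @ (SOME b. b \<in> B))),
      one = pres_class S R []\<rparr>"

definition BB_rels :: "'v set set \<Rightarrow> ('v \<times> 'v) word set" where
  "BB_rels \<Delta> =
     {[(e, True), (rev_edge e, True)] | e. e \<in> edges \<Delta>} \<union>
     {[(e, True), (f, True), (g, True)] | e f g. e \<in> edges \<Delta> \<and> f \<in> edges \<Delta> \<and> g \<in> edges \<Delta> \<and>
        snd e = fst f \<and> snd f = fst g \<and> snd g = fst e} \<union>
     {[(e, False), (f, False), (g, False)] | e f g. e \<in> edges \<Delta> \<and> f \<in> edges \<Delta> \<and> g \<in> edges \<Delta> \<and>
        snd e = fst f \<and> snd f = fst g \<and> snd g = fst e}"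

definition BB_group :: "'v set set \<Rightarrow> ('v \<times> 'v) word set monoid" where
  "BB_group \<Delta> = presented_group (edges \<Delta>) (BB_rels \<Delta>)"

definition bbgen :: "'v set set \<Rightarrow> 'v \<times> 'v \<Rightarrow> ('v \<times> 'v) word set" where
  "bbgen \<Delta> e = pres_class (edges \<Delta>) (BB_rels \<Delta>) [(e, True)]"

definition path_pow :: "'v set set \<Rightarrow> int \<Rightarrow> ('v \<times> 'v) list \<Rightarrow> ('v \<times> 'v) word set" where
  "path_pow \<Delta> n es =
     foldr (\<lambda>e acc. (bbgen \<Delta> e [^]\<^bsub>BB_group \<Delta>\<^esub> n) \<otimes>\<^bsub>BB_group \<Delta>\<^esub> acc) es \<one>\<^bsub>BB_group \<Delta>\<^esub>"

definition tp :: "'v set set \<Rightarrow> 'v set set \<Rightarrow> int \<Rightarrow> 'v \<Rightarrow> 'v \<Rightarrow> ('v \<times> 'v) word set" where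
  "tp \<Delta> T n u v = path_pow \<Delta> n (tree_path T u v)"

definition aut_pow :: "('a, 'b) monoid_scheme \<Rightarrow> ('a \<Rightarrow> 'a) \<Rightarrow> int \<Rightarrow> 'a \<Rightarrow> 'a" where
  "aut_pow G f k = (if 0 \<le> k then f ^^ nat k else (inv_into (carrier G) f) ^^ nat (- k))"

end

theory Submission
  imports Defs
begin

text \<open>In \<open>H\<^sub>\<Delta>\<close> the product \<open>p(u,v)\<close> of the generators along an edge path from \<open>u\<close> to \<open>v\<close>
  depends only on the endpoints: backtracks and triangles are relators, and as \<open>\<Delta>\<close> is simply
  connected every closed edge path reduces to the empty one by these two moves. In particular
  \<open>p(\<iota>e, q) = e \<cdot> p(\<tau>e, q)\<close>. Since \<open>\<theta>(e)\<close> is the conjugate of \<open>e\<close> by \<open>p(q, \<iota>e)\<close>, this gives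
  \<open>\<theta>(e^n) = p(q, \<iota>e) \<cdot> e^(n+1) \<cdot> p(\<tau>e, q)\<close>, and along a path the inner tree paths telescope.
  The formulas for \<open>\<theta>\<^sup>-\<^sup>1\<close> are checked by applying \<open>\<theta>\<close> to their right-hand sides, and the one
  for \<open>\<theta>^k\<close> follows by induction on \<open>|k|\<close>, because \<open>\<theta>\<close> and \<open>\<theta>\<^sup>-\<^sup>1\<close> shift the exponent of every
  \<open>p\<^sub>k\<close> and of every power of a generator by \<open>1\<close> and \<open>-1\<close> respectively.\<close>

section \<open>Presented groups\<close>

lemma word_on_Nil [simp]: "word_on S []"
  by (simp add: word_on_def)

lemma word_on_Cons [simp]: "word_on S (x # v) \<longleftrightarrow> fst x \<in> S \<and> word_on S v"
  by (auto simp: word_on_def)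

lemma word_on_append [simp]: "word_on S (u @ v) \<longleftrightarrow> word_on S u \<and> word_on S v"
  by (auto simp: word_on_def)

lemma pres_eq_word_on: "pres_eq S R w w' \<Longrightarrow> word_on S w \<and> word_on S w'"
  by (induction rule: pres_eq.induct) auto

lemma pres_eq_append_left:
  "pres_eq S R w w' \<Longrightarrow> word_on S u \<Longrightarrow> pres_eq S R (u @ w) (u @ w')"
proof (induction rule: pres_eq.induct)
  case (pe_cancel u' v x b)
  then show ?case using pres_eq.pe_cancel[of S "u @ u'" v x R b] by simp
next
  case (pe_rel u' v r)
  then show ?case using pres_eq.pe_rel[of S "u @ u'" v r R] by simp
qed (auto intro: pres_eq.intros)

lemma pres_eq_append_right:
  "pres_eq S R w w' \<Longrightarrow> word_on S u \<Longrightarrow> pres_eq S R (w @ u) (w' @ u)"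
proof (induction rule: pres_eq.induct)
  case (pe_cancel u' v x b)
  then show ?case using pres_eq.pe_cancel[of S u' "v @ u" x R b] by simp
next
  case (pe_rel u' v r)
  then show ?case using pres_eq.pe_rel[of S u' "v @ u" r R] by simp
qed (auto intro: pres_eq.intros)

lemma pres_eq_append:
  "pres_eq S R w w' \<Longrightarrow> pres_eq S R v v' \<Longrightarrow> pres_eq S R (w @ v) (w' @ v')"
  by (meson pe_trans pres_eq_append_left pres_eq_append_right pres_eq_word_on)

lemma pres_class_eq: "pres_eq S R w w' \<Longrightarrow> pres_class S R w = pres_class S R w'"
  unfolding pres_class_def by (blast intro: pe_trans pe_sym)

lemma pres_eq_some_in_pres_class:
  assumes "word_on S w"
  shows "pres_eq S R w (SOME a. a \<in> pres_class S R w)"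
proof -
  have "w \<in> pres_class S R w"
    using assms by (simp add: pres_class_def pe_refl)
  then have "(SOME a. a \<in> pres_class S R w) \<in> pres_class S R w"
    by (rule someI)
  then show ?thesis
    by (simp add: pres_class_def)
qed

lemma presented_group_carrier:
  "carrier (presented_group S R) = pres_class S R ` {w. word_on S w}"
  by (simp add: presented_group_def)

lemma presented_group_one: "\<one>\<^bsub>presented_group S R\<^esub> = pres_class S R []"
  by (simp add: presented_group_def)

lemma presented_group_mult:
  assumes "word_on S w" "word_on S v"
  shows "pres_class S R w \<otimes>\<^bsub>presented_group S R\<^esub> pres_class S R v = pres_class S R (w @ v)"
proof -
  have "pres_eq S R (w @ v) ((SOME a. a \<in> pres_class S R w) @ (SOME b. b \<in> pres_class S R v))"
    using assms by (intro pres_eq_append pres_eq_some_in_pres_class)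
  then show ?thesis
    unfolding presented_group_def by (simp add: pres_class_eq)
qed

definition inv_word :: "'a word \<Rightarrow> 'a word" where
  "inv_word w = rev (map (\<lambda>(x, b). (x, \<not> b)) w)"

lemma word_on_inv_word [simp]: "word_on S (inv_word w) \<longleftrightarrow> word_on S w"
  by (induction w) (auto simp: inv_word_def)

lemma inv_word_inv_word [simp]: "inv_word (inv_word w) = w"
  by (induction w) (auto simp: inv_word_def)

lemma pres_eq_append_inv_word: "word_on S w \<Longrightarrow> pres_eq S R (w @ inv_word w) []"
proof (induction w)
  case Nil
  then show ?case by (simp add: pe_refl inv_word_def)
next
  case (Cons a w)
  obtain x b where a: "a = (x, b)" by fastforce
  have x: "x \<in> S" and w: "word_on S w" using Cons.prems a by auto
  have "pres_eq S R ([(x, b)] @ (w @ inv_word w) @ [(x, \<not> b)]) ([(x, b)] @ [] @ [(x, \<not> b)])"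
    using Cons.IH w x by (intro pres_eq_append_left pres_eq_append_right) auto
  moreover have "pres_eq S R ([] @ [(x, b), (x, \<not> b)] @ []) ([] @ [])"
    using x by (intro pe_cancel) auto
  ultimately show ?case
    unfolding a inv_word_def by (auto intro: pe_trans)
qed

lemma group_presented_group: "group (presented_group S R)"
proof (rule groupI)
  let ?G = "presented_group S R"
  show "\<exists>y\<in>carrier ?G. y \<otimes>\<^bsub>?G\<^esub> x = \<one>\<^bsub>?G\<^esub>" if x: "x \<in> carrier ?G" for x
  proof -
    obtain w where w: "word_on S w" "x = pres_class S R w"
      using x unfolding presented_group_carrier by blast
    have "pres_class S R (inv_word w) \<otimes>\<^bsub>?G\<^esub> x = \<one>\<^bsub>?G\<^esub>"
      using w pres_eq_append_inv_word[of S "inv_word w" R]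
      by (simp add: presented_group_mult presented_group_one pres_class_eq)
    moreover have "pres_class S R (inv_word w) \<in> carrier ?G"
      using w by (auto simp: presented_group_carrier)
    ultimately show ?thesis by blast
  qed
qed (auto simp: presented_group_carrier presented_group_mult presented_group_one)

lemma group_BB_group: "group (BB_group \<Delta>)"
  unfolding BB_group_def by (rule group_presented_group)

section \<open>Walks, geodesics and trees\<close>

lemma walk_append: "walk G x y (xs @ ys) \<longleftrightarrow> (\<exists>z. walk G x z xs \<and> walk G z y ys)"
  by (induction xs arbitrary: x) auto

lemma walk_mono: "walk G x y es \<Longrightarrow> G \<subseteq> G' \<Longrightarrow> walk G' x y es"
  by (induction es arbitrary: x) auto

lemma walk_Diff:
  "walk G x y es \<Longrightarrow> (\<forall>(c, d)\<in>set es. {c, d} \<noteq> s) \<Longrightarrow> walk (G - {s}) x y es"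
  by (induction es arbitrary: x) auto

definition rev_walk :: "('v \<times> 'v) list \<Rightarrow> ('v \<times> 'v) list" where
  "rev_walk es = rev (map rev_edge es)"

lemma rev_walk_simps [simp]:
  "rev_walk [] = []" "rev_walk (e # es) = rev_walk es @ [rev_edge e]"
  "length (rev_walk es) = length es"
  by (auto simp: rev_walk_def)

lemma set_rev_walk: "set (rev_walk es) = rev_edge ` set es"
  by (simp add: rev_walk_def)

lemma walk_rev_walk: "walk G x y es \<Longrightarrow> walk G y x (rev_walk es)"
proof (induction es arbitrary: x)
  case (Cons e es)
  obtain a b where "e = (a, b)" by fastforce
  moreover have "{b, a} = {a, b}" by auto
  ultimately show ?case using Cons by (auto simp: walk_append rev_edge_def)
qed simp

lemma rev_edge_in_edges: "e \<in> edges \<Delta> \<Longrightarrow> rev_edge e \<in> edges \<Delta>"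
  by (auto simp: edges_def rev_edge_def insert_commute)

lemma edge_vertices: "e \<in> edges \<Delta> \<Longrightarrow> fst e \<in> vertices \<Delta> \<and> snd e \<in> vertices \<Delta>"
  by (auto simp: edges_def vertices_def)

lemma walk_one_skel_edges: "walk (one_skel \<Delta>) x y es \<Longrightarrow> set es \<subseteq> edges \<Delta>"
proof (induction es arbitrary: x)
  case (Cons e es)
  then show ?case by (cases e) (auto simp: one_skel_def edges_def)
qed simp

lemma walk_one_skel_Cons:
  "e \<in> edges \<Delta> \<Longrightarrow> walk (one_skel \<Delta>) (snd e) y es \<Longrightarrow> walk (one_skel \<Delta>) (fst e) y (e # es)"
  by (cases e) (auto simp: edges_def one_skel_def)

lemma cpath_start_vertex: "cpath \<Delta> es \<Longrightarrow> fst (hd es) \<in> vertices \<Delta>"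
  unfolding cpath_def by (meson edge_vertices hd_in_set subsetD)

lemma walk_one_skel_start_vertex:
  "walk (one_skel \<Delta>) x y es \<Longrightarrow> es \<noteq> [] \<Longrightarrow> x \<in> vertices \<Delta>"
  by (cases es) (auto simp: one_skel_def vertices_def)

lemma walk_one_skel_end_vertex:
  "walk (one_skel \<Delta>) x y es \<Longrightarrow> x \<in> vertices \<Delta> \<Longrightarrow> y \<in> vertices \<Delta>"
proof (induction es arbitrary: x)
  case (Cons e es)
  obtain a b where e: "e = (a, b)" by fastforce
  have "b \<in> vertices \<Delta>" "walk (one_skel \<Delta>) b y es"
    using Cons.prems e by (auto simp: one_skel_def vertices_def)
  then show ?case using Cons.IH by blast
qed simp

lemma cpath_walk:
  assumes "cpath \<Delta> es"
  shows "walk (one_skel \<Delta>) (fst (hd es)) (snd (last es)) es"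
  using assms unfolding cpath_def
proof (induction es)
  case (Cons e es)
  have e: "e \<in> edges \<Delta>" using Cons.prems by simp
  show ?case
  proof (cases "es = []")
    case True
    then show ?thesis using walk_one_skel_Cons[OF e, of "snd e" "[]"] by simp
  next
    case False
    have "\<forall>i. Suc i < length es \<longrightarrow> snd (es ! i) = fst (es ! Suc i)"
      using Cons.prems by (metis Suc_less_eq length_Cons nth_Cons_Suc)
    then have "walk (one_skel \<Delta>) (fst (hd es)) (snd (last es)) es"
      using Cons False by auto
    moreover have "snd e = fst (hd es)"
      using Cons.prems False by (auto simp: hd_conv_nth)
    ultimately show ?thesis using walk_one_skel_Cons[OF e] False by simp
  qed
qed simp

definition geodesic :: "'v set set \<Rightarrow> 'v \<Rightarrow> 'v \<Rightarrow> ('v \<times> 'v) list \<Rightarrow> bool" where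
  "geodesic G u v es \<longleftrightarrow> walk G u v es \<and> (\<forall>es'. walk G u v es' \<longrightarrow> length es \<le> length es')"

definition forest :: "'v set set \<Rightarrow> bool" where
  "forest G \<longleftrightarrow> (\<forall>s\<in>G. \<forall>a b. s = {a, b} \<longrightarrow> \<not> (\<exists>es. walk (G - {s}) a b es))"

lemma ex_geodesic: "walk G u v es \<Longrightarrow> \<exists>es. geodesic G u v es"
  unfolding geodesic_def by (rule ex_has_least_nat[of "walk G u v" es length])

lemma geodesic_rev_walk:
  assumes "geodesic G u v es"
  shows "geodesic G v u (rev_walk es)"
  using assms walk_rev_walk[of G v u] walk_rev_walk[of G u v]
  unfolding geodesic_def by (metis rev_walk_simps(3))

lemma geodesic_Cons:
  assumes "geodesic G u v ((u, a) # r)"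
  shows "geodesic G a v r"
  using assms unfolding geodesic_def
  by (metis Suc_le_mono length_Cons walk.simps(2))

lemma geodesic_avoids_start:
  assumes "geodesic G u v ((u, a) # r)" and "(c, d) \<in> set r"
  shows "c \<noteq> u \<and> d \<noteq> u"
proof -
  obtain r1 r2 where r: "r = r1 @ (c, d) # r2"
    using assms(2) by (meson split_list)
  have "walk G a v r" using assms(1) by (simp add: geodesic_def)
  then have "walk G c v ((c, d) # r2)" and "walk G d v r2"
    unfolding r walk_append by auto
  moreover have "\<And>es'. walk G u v es' \<Longrightarrow> Suc (length r) \<le> length es'"
    using assms(1) by (simp add: geodesic_def)
  ultimately show ?thesis
    using r by fastforce
qed

text \<open>If two geodesics from \<open>u\<close> left along different edges \<open>{u,a}\<close> and \<open>{u,b}\<close>, the second one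
  followed by the reversal of the first would connect \<open>u\<close> to \<open>a\<close> without using \<open>{u,a}\<close>.\<close>

lemma forest_geodesics_first_step:
  assumes "forest G" and r1: "geodesic G u v ((u, a) # r1)" and r2: "geodesic G u v ((u, b) # r2)"
  shows "a = b"
proof (rule ccontr)
  assume "a \<noteq> b"
  let ?W = "(u, b) # r2 @ rev_walk r1"
  have ua: "u \<noteq> a" "{u, a} \<in> G" and ub: "u \<noteq> b" "{u, b} \<in> G"
    using r1 r2 by (auto simp: geodesic_def)
  have "walk G u a ?W"
    using r1 r2 walk_rev_walk[of G a v r1] by (auto simp: geodesic_def walk_append)
  moreover have "{c, d} \<noteq> {u, a}" if "(c, d) \<in> set ?W" for c d
  proof -
    have "(c, d) = (u, b) \<or> (c \<noteq> u \<and> d \<noteq> u)"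
      using that geodesic_avoids_start[OF r2, of c d] geodesic_avoids_start[OF r1, of d c]
      by (auto simp: set_rev_walk rev_edge_def)
    then show ?thesis
      using \<open>a \<noteq> b\<close> ub by (auto simp: doubleton_eq_iff)
  qed
  ultimately have "walk (G - {{u, a}}) u a ?W"
    by (auto intro: walk_Diff)
  then show False
    using \<open>forest G\<close> ua unfolding forest_def by blast
qed

lemma forest_geodesic_unique:
  "forest G \<Longrightarrow> geodesic G u v es1 \<Longrightarrow> geodesic G u v es2 \<Longrightarrow> es1 = es2"
proof (induction es1 arbitrary: u es2)
  case Nil
  then have "walk G u v []" "length es2 \<le> 0"
    unfolding geodesic_def by (metis list.size(3) walk.simps(1))+
  then show ?case by simp
next
  case (Cons e1 r1)
  have "length es2 = Suc (length r1)"
    using Cons.prems(2,3) unfolding geodesic_def by (metis le_antisym length_Cons)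
  then obtain e2 r2 where es2: "es2 = e2 # r2" by (cases es2) auto
  obtain a b where e1: "e1 = (u, a)" and e2: "e2 = (u, b)"
    using Cons.prems(2,3) es2 unfolding geodesic_def
    by (metis surj_pair walk.simps(2))
  have g1: "geodesic G u v ((u, a) # r1)" and g2: "geodesic G u v ((u, b) # r2)"
    using Cons.prems e1 e2 es2 by simp_all
  have "a = b"
    by (rule forest_geodesics_first_step[OF Cons.prems(1) g1 g2])
  then have "r1 = r2"
    using Cons.IH[OF Cons.prems(1) geodesic_Cons[OF g1]] geodesic_Cons[OF g2] by simp
  then show ?case using e1 e2 es2 \<open>a = b\<close> by simp
qed

lemma spanning_tree_forest: "spanning_tree \<Delta> T \<Longrightarrow> forest T"
  by (simp add: spanning_tree_def forest_def)

lemma tree_path_geodesic: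
  assumes T: "spanning_tree \<Delta> T" and "u \<in> vertices \<Delta>" "v \<in> vertices \<Delta>"
  shows "geodesic T u v (tree_path T u v)"
proof -
  obtain es where "walk T u v es"
    using assms unfolding spanning_tree_def by blast
  then obtain es0 where es0: "geodesic T u v es0"
    using ex_geodesic by metis
  have "tree_path T u v = es0"
    unfolding tree_path_def geodesic_def[symmetric]
    using es0 forest_geodesic_unique[OF spanning_tree_forest[OF T]] by blast
  then show ?thesis using es0 by simp
qed

lemma tree_path_walk:
  assumes "spanning_tree \<Delta> T" "u \<in> vertices \<Delta>" "v \<in> vertices \<Delta>"
  shows "walk (one_skel \<Delta>) u v (tree_path T u v)"
  using tree_path_geodesic[OF assms] assms(1)
  by (auto simp: geodesic_def spanning_tree_def intro: walk_mono)

lemma tree_path_swap: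
  assumes T: "spanning_tree \<Delta> T" and "u \<in> vertices \<Delta>" "v \<in> vertices \<Delta>"
  shows "tree_path T v u = rev_walk (tree_path T u v)"
  using forest_geodesic_unique[OF spanning_tree_forest[OF T]]
    tree_path_geodesic[OF T assms(3,2)] geodesic_rev_walk[OF tree_path_geodesic[OF assms]]
  by blast

lemma tree_path_self:
  assumes T: "spanning_tree \<Delta> T" and "u \<in> vertices \<Delta>"
  shows "tree_path T u u = []"
proof -
  have "geodesic T u u []" by (simp add: geodesic_def)
  then show ?thesis
    using forest_geodesic_unique[OF spanning_tree_forest[OF T]] tree_path_geodesic[OF assms assms(2)]
    by blast
qed

lemma simplicial_complex_triangle_edge:
  assumes "simplicial_complex \<Delta>" "{a, b, c} \<in> \<Delta>" "card {a, b, c} = 3"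
  shows "(a, c) \<in> edges \<Delta>"
proof -
  have "card {a, b, a} \<le> 2"
    by (simp add: card_insert_if)
  then have "a \<noteq> c"
    using assms(3) by auto
  moreover have "{a, c} \<subseteq> {a, b, c}"
    by auto
  then have "{a, c} \<in> \<Delta>"
    using assms(1,2) unfolding simplicial_complex_def by blast
  ultimately show ?thesis by (simp add: edges_def)
qed

section \<open>Edge paths in the Bestvina--Brady group\<close>

lemma (in group) inv_mult_cancel [simp]:
  "x \<in> carrier G \<Longrightarrow> y \<in> carrier G \<Longrightarrow> inv x \<otimes> (x \<otimes> y) = y"
  by (simp add: m_assoc[symmetric])

lemma (in group) int_pow_conj:
  assumes "a \<in> carrier G" "x \<in> carrier G"
  shows "(a \<otimes> x \<otimes> inv a) [^] (n::int) = a \<otimes> x [^] n \<otimes> inv a"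
proof -
  have "(\<lambda>y. a \<otimes> y \<otimes> inv a) \<in> hom G G"
    using assms by (intro homI) (auto simp: m_assoc)
  from hom_int_pow[OF this assms(2) is_group is_group] show ?thesis
    by simp
qed

locale bb_group = group G for G :: "('v \<times> 'v) word set monoid" (structure) +
  fixes \<Delta> :: "'v set set"
  assumes G_eq: "G = BB_group \<Delta>"
begin

lemma bbgen_closed [simp]: "e \<in> edges \<Delta> \<Longrightarrow> bbgen \<Delta> e \<in> carrier G"
  unfolding G_eq BB_group_def bbgen_def presented_group_carrier by (rule imageI) simp

lemma bbgen_relator:
  assumes "r \<in> BB_rels \<Delta>" "r = map (\<lambda>e. (e, True)) es" "set es \<subseteq> edges \<Delta>"
  shows "foldr (\<lambda>e x. bbgen \<Delta> e \<otimes> x) es \<one> = \<one>"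
proof -
  have "pres_eq (edges \<Delta>) (BB_rels \<Delta>) ([] @ r @ []) ([] @ [])"
    using assms by (intro pe_rel) (auto simp: word_on_def)
  moreover have "foldr (\<lambda>e x. bbgen \<Delta> e \<otimes> x) es \<one> = pres_class (edges \<Delta>) (BB_rels \<Delta>) r"
    using assms(2,3) by (induction es arbitrary: r)
      (auto simp: G_eq BB_group_def bbgen_def presented_group_one presented_group_mult word_on_def)
  ultimately show ?thesis
    by (simp add: pres_class_eq G_eq BB_group_def presented_group_one)
qed

lemma bbgen_mult_rev_edge:
  assumes "e \<in> edges \<Delta>"
  shows "bbgen \<Delta> e \<otimes> bbgen \<Delta> (rev_edge e) = \<one>"
proof -
  have "[(e, True), (rev_edge e, True)] \<in> BB_rels \<Delta>"
    unfolding BB_rels_def using assms by blast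
  from bbgen_relator[OF this, of "[e, rev_edge e]"] show ?thesis
    using assms rev_edge_in_edges[OF assms] by simp
qed

lemma inv_bbgen:
  assumes "e \<in> edges \<Delta>"
  shows "inv (bbgen \<Delta> e) = bbgen \<Delta> (rev_edge e)"
  using bbgen_mult_rev_edge[OF rev_edge_in_edges[OF assms]] assms rev_edge_in_edges[OF assms]
  by (intro inv_equality) (simp_all add: rev_edge_def)

lemma bbgen_triangle:
  assumes ab: "(a, b) \<in> edges \<Delta>" and bc: "(b, c) \<in> edges \<Delta>" and ac: "(a, c) \<in> edges \<Delta>"
  shows "bbgen \<Delta> (a, b) \<otimes> bbgen \<Delta> (b, c) = bbgen \<Delta> (a, c)"
proof -
  have ca: "(c, a) \<in> edges \<Delta>"
    using rev_edge_in_edges[OF ac] by (simp add: rev_edge_def)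
  have "[((a, b), True), ((b, c), True), ((c, a), True)] \<in> BB_rels \<Delta>"
    unfolding BB_rels_def using ab bc ca by simp
  from bbgen_relator[OF this, of "[(a, b), (b, c), (c, a)]"]
  have "bbgen \<Delta> (a, b) \<otimes> bbgen \<Delta> (b, c) \<otimes> bbgen \<Delta> (c, a) = \<one>"
    using ab bc ca by (simp add: m_assoc)
  moreover have "bbgen \<Delta> (c, a) = inv (bbgen \<Delta> (a, c))"
    using inv_bbgen[OF ac] by (simp add: rev_edge_def)
  ultimately show ?thesis
    using ab bc ac by (simp add: inv_solve_right')
qed

lemma path_pow_Nil [simp]: "path_pow \<Delta> n [] = \<one>"
  by (simp add: path_pow_def G_eq)

lemma path_pow_Cons [simp]: "path_pow \<Delta> n (e # es) = bbgen \<Delta> e [^] n \<otimes> path_pow \<Delta> n es"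
  by (simp add: path_pow_def G_eq)

lemma path_pow_closed [simp]: "set es \<subseteq> edges \<Delta> \<Longrightarrow> path_pow \<Delta> n es \<in> carrier G"
  by (induction es) auto

lemma path_pow_append:
  "set xs \<subseteq> edges \<Delta> \<Longrightarrow> set ys \<subseteq> edges \<Delta> \<Longrightarrow>
   path_pow \<Delta> n (xs @ ys) = path_pow \<Delta> n xs \<otimes> path_pow \<Delta> n ys"
  by (induction xs) (auto simp: m_assoc)

lemma path_pow_zero [simp]: "path_pow \<Delta> 0 es = \<one>"
  by (induction es) auto

lemma path_pow_rev_walk:
  "set es \<subseteq> edges \<Delta> \<Longrightarrow> path_pow \<Delta> n (rev_walk es) = inv (path_pow \<Delta> n es)"
proof (induction es)
  case (Cons e es)
  then have e: "e \<in> edges \<Delta>" and es: "set es \<subseteq> edges \<Delta>" by auto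
  have "set (rev_walk es) \<subseteq> edges \<Delta>"
    using es rev_edge_in_edges unfolding set_rev_walk by blast
  then have "path_pow \<Delta> n (rev_walk (e # es)) = inv (path_pow \<Delta> n es) \<otimes> inv (bbgen \<Delta> e [^] n)"
    using Cons.IH es e rev_edge_in_edges[OF e]
    by (simp add: path_pow_append inv_bbgen[symmetric] int_pow_inv)
  then show ?case
    using e es by (simp add: inv_mult_group)
qed simp

lemma path_pow_one_ep_eq:
  assumes "simplicial_complex \<Delta>"
  shows "ep_eq \<Delta> x y es es' \<Longrightarrow> path_pow \<Delta> 1 es = path_pow \<Delta> 1 es'"
proof (induction rule: ep_eq.induct)
  case (ep_back u e w)
  then have u: "set u \<subseteq> edges \<Delta>" and w: "set w \<subseteq> edges \<Delta>" and e: "e \<in> edges \<Delta>"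
    using walk_one_skel_edges[OF ep_back] by auto
  have "path_pow \<Delta> 1 ([e, rev_edge e] @ w) = path_pow \<Delta> 1 w"
    using e w rev_edge_in_edges[OF e] by (simp add: inv_bbgen[symmetric] m_assoc[symmetric])
  then show ?case
    using u w e rev_edge_in_edges[OF e] by (simp add: path_pow_append)
next
  case (ep_tri u a b c w)
  then have u: "set u \<subseteq> edges \<Delta>" and w: "set w \<subseteq> edges \<Delta>"
    and ab: "(a, b) \<in> edges \<Delta>" and bc: "(b, c) \<in> edges \<Delta>"
    using walk_one_skel_edges[OF ep_tri.hyps(1)] by auto
  have ac: "(a, c) \<in> edges \<Delta>"
    using simplicial_complex_triangle_edge[OF assms ep_tri.hyps(2,3)] .
  have "path_pow \<Delta> 1 ([(a, b), (b, c)] @ w) = path_pow \<Delta> 1 ([(a, c)] @ w)"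
    using ab bc ac w by (simp add: m_assoc[symmetric] bbgen_triangle)
  then show ?case
    using u w ab bc ac by (simp add: path_pow_append)
qed simp_all

end

locale bb_tree = bb_group G \<Delta> for G :: "('v \<times> 'v) word set monoid" (structure) and \<Delta> +
  fixes T :: "'v set set"
  assumes simplicial: "simplicial_complex \<Delta>" and simply_conn: "simply_connected \<Delta>"
    and spanning: "spanning_tree \<Delta> T"
begin

lemma path_pow_one_closed_walk:
  assumes "walk (one_skel \<Delta>) x x es"
  shows "path_pow \<Delta> 1 es = \<one>"
proof (cases "es = []")
  case False
  then have "ep_eq \<Delta> x x es []"
    using assms simply_conn walk_one_skel_start_vertex[OF assms] by (auto simp: simply_connected_def)
  then show ?thesis
    using path_pow_one_ep_eq[OF simplicial] by fastforce
qed simp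

lemma path_pow_one_walk_eq:
  assumes es: "walk (one_skel \<Delta>) x y es" and es': "walk (one_skel \<Delta>) x y es'"
  shows "path_pow \<Delta> 1 es = path_pow \<Delta> 1 es'"
proof -
  have rev: "walk (one_skel \<Delta>) y x (rev_walk es')"
    using walk_rev_walk[OF es'] .
  then have "walk (one_skel \<Delta>) x x (es @ rev_walk es')"
    using es unfolding walk_append by blast
  from path_pow_one_closed_walk[OF this]
  have "path_pow \<Delta> 1 es \<otimes> inv (path_pow \<Delta> 1 es') = \<one>"
    using walk_one_skel_edges[OF es] walk_one_skel_edges[OF rev] walk_one_skel_edges[OF es']
    by (simp add: path_pow_append path_pow_rev_walk)
  then show ?thesis
    using walk_one_skel_edges[OF es] walk_one_skel_edges[OF es'] by (simp add: inv_solve_right')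
qed

lemma tree_path_edges:
  "u \<in> vertices \<Delta> \<Longrightarrow> v \<in> vertices \<Delta> \<Longrightarrow> set (tree_path T u v) \<subseteq> edges \<Delta>"
  by (rule walk_one_skel_edges[OF tree_path_walk[OF spanning]])

lemma tp_closed [simp]: "u \<in> vertices \<Delta> \<Longrightarrow> v \<in> vertices \<Delta> \<Longrightarrow> tp \<Delta> T n u v \<in> carrier G"
  unfolding tp_def by (simp add: tree_path_edges)

lemma tp_swap:
  assumes "u \<in> vertices \<Delta>" "v \<in> vertices \<Delta>"
  shows "tp \<Delta> T n v u = inv (tp \<Delta> T n u v)"
  unfolding tp_def tree_path_swap[OF spanning assms] using tree_path_edges[OF assms]
  by (rule path_pow_rev_walk)

lemma tp_self [simp]: "u \<in> vertices \<Delta> \<Longrightarrow> tp \<Delta> T n u u = \<one>"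
  unfolding tp_def by (simp add: tree_path_self[OF spanning])

lemma tp_zero [simp]: "tp \<Delta> T 0 u v = \<one>"
  by (simp add: tp_def)

lemma tp_one_fst_edge:
  assumes e: "e \<in> edges \<Delta>" and v: "v \<in> vertices \<Delta>"
  shows "tp \<Delta> T 1 (fst e) v = bbgen \<Delta> e \<otimes> tp \<Delta> T 1 (snd e) v"
proof -
  have ends: "fst e \<in> vertices \<Delta>" "snd e \<in> vertices \<Delta>"
    using edge_vertices[OF e] by auto
  have "walk (one_skel \<Delta>) (fst e) v (e # tree_path T (snd e) v)"
    using e tree_path_walk[OF spanning ends(2) v] by (rule walk_one_skel_Cons)
  with tree_path_walk[OF spanning ends(1) v]
  have "tp \<Delta> T 1 (fst e) v = path_pow \<Delta> 1 (e # tree_path T (snd e) v)"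
    unfolding tp_def by (rule path_pow_one_walk_eq)
  then show ?thesis
    using e by (simp add: tp_def)
qed

lemma funpow_bbgen_shift:
  fixes s :: int
  assumes f: "f \<in> hom G G" and e: "e \<in> edges \<Delta>" and v: "v \<in> vertices \<Delta>"
    and f_tp: "\<And>k x y. x \<in> vertices \<Delta> \<Longrightarrow> y \<in> vertices \<Delta> \<Longrightarrow>
      f (tp \<Delta> T k x y) = tp \<Delta> T s v x \<otimes> tp \<Delta> T (k + s) x y \<otimes> tp \<Delta> T s y v"
    and f_gen: "\<And>n::int. f (bbgen \<Delta> e [^] n) =
      tp \<Delta> T s v (fst e) \<otimes> bbgen \<Delta> e [^] (n + s) \<otimes> tp \<Delta> T s (snd e) v"
  shows "(f ^^ m) (bbgen \<Delta> e) =
    tp \<Delta> T (int m * s) v (fst e) \<otimes> bbgen \<Delta> e [^] (int m * s + 1) \<otimes> tp \<Delta> T (int m * s) (snd e) v"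
proof (induction m)
  case 0
  then show ?case using e by simp
next
  case (Suc m)
  let ?k = "int m * s"
  have vs: "fst e \<in> vertices \<Delta>" "snd e \<in> vertices \<Delta>"
    using edge_vertices[OF e] by auto
  have "(f ^^ Suc m) (bbgen \<Delta> e) =
      f (tp \<Delta> T ?k v (fst e)) \<otimes> f (bbgen \<Delta> e [^] (?k + 1)) \<otimes> f (tp \<Delta> T ?k (snd e) v)"
    using Suc.IH f e v vs by (simp add: hom_mult)
  also have "\<dots> = (tp \<Delta> T s v v \<otimes> tp \<Delta> T (?k + s) v (fst e) \<otimes> tp \<Delta> T s (fst e) v)
      \<otimes> (tp \<Delta> T s v (fst e) \<otimes> bbgen \<Delta> e [^] (?k + 1 + s) \<otimes> tp \<Delta> T s (snd e) v)
      \<otimes> (tp \<Delta> T s v (snd e) \<otimes> tp \<Delta> T (?k + s) (snd e) v \<otimes> tp \<Delta> T s v v)"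
    using v vs by (simp only: f_tp f_gen)
  also have "\<dots> = tp \<Delta> T (?k + s) v (fst e) \<otimes> bbgen \<Delta> e [^] (?k + 1 + s) \<otimes> tp \<Delta> T (?k + s) (snd e) v"
    using v vs e by (simp add: tp_swap[of v] m_assoc)
  finally show ?case
    by (simp add: algebra_simps)
qed

end

section \<open>The automorphism \<open>\<theta>\<close>\<close>

locale bb_aut = bb_tree G \<Delta> T for G :: "('v \<times> 'v) word set monoid" (structure) and \<Delta> T +
  fixes q :: 'v and \<theta> :: "('v \<times> 'v) word set \<Rightarrow> ('v \<times> 'v) word set"
  assumes q_vertex: "q \<in> vertices \<Delta>"
    and theta_iso: "\<theta> \<in> iso G G"
    and theta_bbgen: "\<forall>e\<in>edges \<Delta>. \<theta> (bbgen \<Delta> e) =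
      tp \<Delta> T 1 q (fst e) \<otimes> bbgen \<Delta> e \<otimes> tp \<Delta> T 1 (fst e) q"
begin

abbreviation \<theta>' :: "('v \<times> 'v) word set \<Rightarrow> ('v \<times> 'v) word set" where
  "\<theta>' \<equiv> inv_into (carrier G) \<theta>"

lemma theta_hom: "\<theta> \<in> hom G G"
  using theta_iso by (simp add: iso_def)

lemma theta_inv_hom: "\<theta>' \<in> hom G G"
  using iso_set_sym[OF theta_iso] by (simp add: iso_def)

lemma theta_mult [simp]: "x \<in> carrier G \<Longrightarrow> y \<in> carrier G \<Longrightarrow> \<theta> (x \<otimes> y) = \<theta> x \<otimes> \<theta> y"
  by (rule hom_mult[OF theta_hom])

lemma theta_one [simp]: "\<theta> \<one> = \<one>"
  using theta_hom by (simp add: group_hom.hom_one group_hom_def group_hom_axioms_def is_group)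

lemma theta_inv_eqI:
  assumes "y \<in> carrier G" "\<theta> y = x"
  shows "\<theta>' x = y"
  using theta_iso assms by (auto simp: iso_def bij_betw_def intro: inv_into_f_eq)

lemma theta_bbgen_pow_conj:
  assumes e: "e \<in> edges \<Delta>"
  shows "\<theta> (bbgen \<Delta> e [^] (n::int)) =
    tp \<Delta> T 1 q (fst e) \<otimes> bbgen \<Delta> e [^] n \<otimes> inv (tp \<Delta> T 1 q (fst e))"
proof -
  have v: "fst e \<in> vertices \<Delta>"
    using edge_vertices[OF e] by simp
  have "\<theta> (bbgen \<Delta> e [^] n) = \<theta> (bbgen \<Delta> e) [^] n"
    using hom_int_pow[OF theta_hom _ is_group is_group] e by simp
  also have "\<theta> (bbgen \<Delta> e) = tp \<Delta> T 1 q (fst e) \<otimes> bbgen \<Delta> e \<otimes> inv (tp \<Delta> T 1 q (fst e))"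
    using theta_bbgen e tp_swap[OF q_vertex v] by simp
  finally show ?thesis
    using e v q_vertex by (simp add: int_pow_conj)
qed

lemma theta_bbgen_pow:
  assumes e: "e \<in> edges \<Delta>"
  shows "\<theta> (bbgen \<Delta> e [^] (n::int)) =
    tp \<Delta> T 1 q (fst e) \<otimes> bbgen \<Delta> e [^] (n + 1) \<otimes> tp \<Delta> T 1 (snd e) q"
proof -
  have v: "fst e \<in> vertices \<Delta>" "snd e \<in> vertices \<Delta>"
    using edge_vertices[OF e] by auto
  have "inv (tp \<Delta> T 1 q (fst e)) = bbgen \<Delta> e \<otimes> tp \<Delta> T 1 (snd e) q"
    using tp_one_fst_edge[OF e q_vertex] tp_swap[OF q_vertex v(1)] by simp
  then show ?thesis
    using e v q_vertex by (simp add: theta_bbgen_pow_conj int_pow_mult m_assoc)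
qed

text \<open>The tree paths inserted by \<open>\<theta>\<close> at the inner vertices of the walk cancel out.\<close>

lemma theta_path_pow:
  "walk (one_skel \<Delta>) a b es \<Longrightarrow> a \<in> vertices \<Delta> \<Longrightarrow>
   \<theta> (path_pow \<Delta> n es) = tp \<Delta> T 1 q a \<otimes> path_pow \<Delta> (n + 1) es \<otimes> tp \<Delta> T 1 b q"
proof (induction es arbitrary: a)
  case Nil
  then show ?case
    using tp_swap[OF q_vertex, of a 1] q_vertex by simp
next
  case (Cons e es)
  have e: "e \<in> edges \<Delta>" and a: "fst e = a" and es: "walk (one_skel \<Delta>) (snd e) b es"
    using Cons.prems(1) walk_one_skel_edges[OF Cons.prems(1)] by (cases e; simp)+
  have v: "snd e \<in> vertices \<Delta>" "b \<in> vertices \<Delta>"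
    using edge_vertices[OF e] walk_one_skel_end_vertex[OF es] by auto
  have E: "set es \<subseteq> edges \<Delta>"
    using walk_one_skel_edges[OF es] .
  have "\<theta> (path_pow \<Delta> n (e # es)) = \<theta> (bbgen \<Delta> e [^] n) \<otimes> \<theta> (path_pow \<Delta> n es)"
    using e E by simp
  also have "\<dots> = (tp \<Delta> T 1 q a \<otimes> bbgen \<Delta> e [^] (n + 1) \<otimes> tp \<Delta> T 1 (snd e) q) \<otimes>
      (tp \<Delta> T 1 q (snd e) \<otimes> path_pow \<Delta> (n + 1) es \<otimes> tp \<Delta> T 1 b q)"
    unfolding theta_bbgen_pow[OF e] Cons.IH[OF es v(1)] a ..
  also have "\<dots> = tp \<Delta> T 1 q a \<otimes> path_pow \<Delta> (n + 1) (e # es) \<otimes> tp \<Delta> T 1 b q"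
    unfolding tp_swap[OF q_vertex v(1), of 1]
    using e E v q_vertex Cons.prems(2) by (simp add: m_assoc)
  finally show ?case .
qed

lemma theta_tp:
  "x \<in> vertices \<Delta> \<Longrightarrow> y \<in> vertices \<Delta> \<Longrightarrow>
   \<theta> (tp \<Delta> T k x y) = tp \<Delta> T 1 q x \<otimes> tp \<Delta> T (k + 1) x y \<otimes> tp \<Delta> T 1 y q"
  unfolding tp_def[of \<Delta> T k] tp_def[of \<Delta> T "k + 1"] by (rule theta_path_pow[OF tree_path_walk[OF spanning]])

lemma theta_inv_path_pow:
  assumes w: "walk (one_skel \<Delta>) a b es" and a: "a \<in> vertices \<Delta>"
  shows "\<theta>' (path_pow \<Delta> n es) = tp \<Delta> T (-1) q a \<otimes> path_pow \<Delta> (n - 1) es \<otimes> tp \<Delta> T (-1) b q"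
proof (rule theta_inv_eqI)
  have b: "b \<in> vertices \<Delta>" and E: "set es \<subseteq> edges \<Delta>"
    using walk_one_skel_end_vertex[OF w a] walk_one_skel_edges[OF w] by auto
  show "tp \<Delta> T (-1) q a \<otimes> path_pow \<Delta> (n - 1) es \<otimes> tp \<Delta> T (-1) b q \<in> carrier G"
    using a b E q_vertex by simp
  have "\<theta> (tp \<Delta> T (-1) q a \<otimes> path_pow \<Delta> (n - 1) es \<otimes> tp \<Delta> T (-1) b q) =
      tp \<Delta> T 1 a q \<otimes> (tp \<Delta> T 1 q a \<otimes> path_pow \<Delta> n es \<otimes> tp \<Delta> T 1 b q) \<otimes> tp \<Delta> T 1 q b"
    using a b E q_vertex by (simp add: theta_tp theta_path_pow[OF w a])
  also have "\<dots> = path_pow \<Delta> n es"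
    unfolding tp_swap[OF q_vertex a, of 1] tp_swap[OF q_vertex b, of 1]
    using a b E q_vertex by (simp add: m_assoc)
  finally show "\<theta> (tp \<Delta> T (-1) q a \<otimes> path_pow \<Delta> (n - 1) es \<otimes> tp \<Delta> T (-1) b q) = path_pow \<Delta> n es" .
qed

lemma theta_inv_tp:
  "x \<in> vertices \<Delta> \<Longrightarrow> y \<in> vertices \<Delta> \<Longrightarrow>
   \<theta>' (tp \<Delta> T k x y) = tp \<Delta> T (-1) q x \<otimes> tp \<Delta> T (k - 1) x y \<otimes> tp \<Delta> T (-1) y q"
  unfolding tp_def[of \<Delta> T k] tp_def[of \<Delta> T "k - 1"] by (rule theta_inv_path_pow[OF tree_path_walk[OF spanning]])

lemma theta_inv_bbgen_pow:
  assumes e: "e \<in> edges \<Delta>"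
  shows "\<theta>' (bbgen \<Delta> e [^] (n::int)) =
    tp \<Delta> T (-1) q (fst e) \<otimes> bbgen \<Delta> e [^] (n - 1) \<otimes> tp \<Delta> T (-1) (snd e) q"
proof -
  have "walk (one_skel \<Delta>) (fst e) (snd e) [e]"
    using walk_one_skel_Cons[OF e, of "snd e" "[]"] by simp
  from theta_inv_path_pow[OF this, of n] show ?thesis
    using e edge_vertices[OF e] by simp
qed

lemma theta_inv_bbgen_pow_conj:
  assumes e: "e \<in> edges \<Delta>"
  shows "\<theta>' (bbgen \<Delta> e [^] (n::int)) =
    tp \<Delta> T (-1) q (fst e) \<otimes> bbgen \<Delta> e [^] n \<otimes> tp \<Delta> T (-1) (fst e) q"
proof (rule theta_inv_eqI)
  have v: "fst e \<in> vertices \<Delta>"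
    using edge_vertices[OF e] by simp
  show "tp \<Delta> T (-1) q (fst e) \<otimes> bbgen \<Delta> e [^] n \<otimes> tp \<Delta> T (-1) (fst e) q \<in> carrier G"
    using e v q_vertex by simp
  have "\<theta> (tp \<Delta> T (-1) q (fst e) \<otimes> bbgen \<Delta> e [^] n \<otimes> tp \<Delta> T (-1) (fst e) q) =
      tp \<Delta> T 1 (fst e) q \<otimes> (tp \<Delta> T 1 q (fst e) \<otimes> bbgen \<Delta> e [^] n \<otimes> inv (tp \<Delta> T 1 q (fst e)))
      \<otimes> tp \<Delta> T 1 q (fst e)"
    using e v q_vertex by (simp add: theta_tp theta_bbgen_pow_conj)
  also have "\<dots> = bbgen \<Delta> e [^] n"
    unfolding tp_swap[OF q_vertex v, of 1] using e v q_vertex by (simp add: m_assoc)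
  finally show "\<theta> (tp \<Delta> T (-1) q (fst e) \<otimes> bbgen \<Delta> e [^] n \<otimes> tp \<Delta> T (-1) (fst e) q) =
      bbgen \<Delta> e [^] n" .
qed

lemma aut_pow_bbgen:
  assumes e: "e \<in> edges \<Delta>"
  shows "aut_pow G \<theta> k (bbgen \<Delta> e) =
    tp \<Delta> T k q (fst e) \<otimes> bbgen \<Delta> e [^] (k + 1) \<otimes> tp \<Delta> T k (snd e) q"
proof (cases "0 \<le> k")
  case True
  have "(\<theta> ^^ nat k) (bbgen \<Delta> e) = tp \<Delta> T (int (nat k) * 1) q (fst e)
      \<otimes> bbgen \<Delta> e [^] (int (nat k) * 1 + 1) \<otimes> tp \<Delta> T (int (nat k) * 1) (snd e) q"
    by (rule funpow_bbgen_shift[OF theta_hom e q_vertex]) (simp_all add: theta_tp theta_bbgen_pow[OF e])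
  then show ?thesis
    using True by (simp add: aut_pow_def)
next
  case False
  have "(\<theta>' ^^ nat (- k)) (bbgen \<Delta> e) = tp \<Delta> T (int (nat (- k)) * -1) q (fst e)
      \<otimes> bbgen \<Delta> e [^] (int (nat (- k)) * -1 + 1) \<otimes> tp \<Delta> T (int (nat (- k)) * -1) (snd e) q"
    by (rule funpow_bbgen_shift[OF theta_inv_hom e q_vertex])
      (simp_all add: theta_inv_tp theta_inv_bbgen_pow[OF e])
  then show ?thesis
    using False by (simp add: aut_pow_def)
qed

lemma theta_bbgen_pow_eqs:
  fixes n :: int
  assumes e: "e \<in> edges \<Delta>"
  shows "\<theta> (bbgen \<Delta> e [^] n) = tp \<Delta> T 1 q (fst e) \<otimes> bbgen \<Delta> e [^] n \<otimes> tp \<Delta> T 1 (fst e) q \<and>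
    \<theta> (bbgen \<Delta> e [^] n) = tp \<Delta> T 1 q (fst e) \<otimes> bbgen \<Delta> e [^] (n + 1) \<otimes> tp \<Delta> T 1 (snd e) q \<and>
    \<theta> (bbgen \<Delta> e [^] n) = tp \<Delta> T 1 q (fst e) \<otimes> bbgen \<Delta> e [^] (n + 1) \<otimes> inv (tp \<Delta> T 1 q (snd e))"
proof -
  have v: "fst e \<in> vertices \<Delta>" "snd e \<in> vertices \<Delta>"
    using edge_vertices[OF e] by auto
  from theta_bbgen_pow_conj[OF e, of n] theta_bbgen_pow[OF e, of n] show ?thesis
    unfolding tp_swap[OF q_vertex v(1)] tp_swap[OF q_vertex v(2)] by blast
qed

lemma theta_bbgen_eqs:
  assumes e: "e \<in> edges \<Delta>"
  shows "\<theta> (bbgen \<Delta> e) = tp \<Delta> T 1 q (fst e) \<otimes> bbgen \<Delta> e \<otimes> inv (tp \<Delta> T 1 q (fst e)) \<and>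
    \<theta> (bbgen \<Delta> e) = tp \<Delta> T 1 q (fst e) \<otimes> bbgen \<Delta> e [^] (2::int) \<otimes> tp \<Delta> T 1 (snd e) q \<and>
    \<theta> (bbgen \<Delta> e) = tp \<Delta> T 1 q (fst e) \<otimes> bbgen \<Delta> e [^] (2::int) \<otimes> inv (tp \<Delta> T 1 q (snd e))"
proof -
  have pow1: "bbgen \<Delta> e [^] (1::int) = bbgen \<Delta> e"
    using e by simp
  from theta_bbgen_pow_conj[OF e, of 1] theta_bbgen_pow_eqs[OF e, of 1] show ?thesis
    unfolding pow1 one_add_one by blast
qed

lemma theta_inv_bbgen_pow_eqs:
  fixes n :: int
  assumes e: "e \<in> edges \<Delta>"
  shows "\<theta>' (bbgen \<Delta> e [^] n) = tp \<Delta> T (-1) q (fst e) \<otimes> bbgen \<Delta> e [^] n \<otimes> tp \<Delta> T (-1) (fst e) q \<and>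
    \<theta>' (bbgen \<Delta> e [^] n) = tp \<Delta> T (-1) q (fst e) \<otimes> bbgen \<Delta> e [^] (n - 1) \<otimes> tp \<Delta> T (-1) (snd e) q \<and>
    \<theta>' (bbgen \<Delta> e [^] n) =
      tp \<Delta> T (-1) q (fst e) \<otimes> bbgen \<Delta> e [^] (n - 1) \<otimes> inv (tp \<Delta> T (-1) q (snd e))"
proof -
  have v: "snd e \<in> vertices \<Delta>"
    using edge_vertices[OF e] by auto
  from theta_inv_bbgen_pow_conj[OF e, of n] theta_inv_bbgen_pow[OF e, of n] show ?thesis
    unfolding tp_swap[OF q_vertex v] by blast
qed

lemma theta_inv_bbgen_eqs:
  assumes e: "e \<in> edges \<Delta>"
  shows "\<theta>' (bbgen \<Delta> e) = tp \<Delta> T (-1) q (fst e) \<otimes> tp \<Delta> T (-1) (snd e) q \<and>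
    \<theta>' (bbgen \<Delta> e) = tp \<Delta> T (-1) q (fst e) \<otimes> bbgen \<Delta> e \<otimes> tp \<Delta> T (-1) (fst e) q \<and>
    \<theta>' (bbgen \<Delta> e) = tp \<Delta> T (-1) q (fst e) \<otimes> bbgen \<Delta> e \<otimes> inv (tp \<Delta> T (-1) q (fst e))"
proof -
  have v: "fst e \<in> vertices \<Delta>" "snd e \<in> vertices \<Delta>"
    using edge_vertices[OF e] by auto
  have pow: "bbgen \<Delta> e [^] (1::int) = bbgen \<Delta> e" "bbgen \<Delta> e [^] (1 - 1 :: int) = \<one>"
    using e by simp_all
  have "\<theta>' (bbgen \<Delta> e) = tp \<Delta> T (-1) q (fst e) \<otimes> tp \<Delta> T (-1) (snd e) q"
    using theta_inv_bbgen_pow[OF e, of 1] e v q_vertex by simp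
  with theta_inv_bbgen_pow_eqs[OF e, of 1] show ?thesis
    unfolding pow tp_swap[OF q_vertex v(1)] by blast
qed

end


theorem lemma4p1:
  fixes \<Delta> T :: "'v set set" and q :: 'v and \<theta> :: "('v \<times> 'v) word set \<Rightarrow> ('v \<times> 'v) word set"
  assumes "simplicial_complex \<Delta>" and "flag \<Delta>" and "simply_connected \<Delta>"
    and "q \<in> vertices \<Delta>" and "spanning_tree \<Delta> T"
    and "\<theta> \<in> iso (BB_group \<Delta>) (BB_group \<Delta>)"
    and "\<forall>e\<in>edges \<Delta>. \<theta> (bbgen \<Delta> e) =
           tp \<Delta> T 1 q (fst e) \<otimes>\<^bsub>BB_group \<Delta>\<^esub> bbgen \<Delta> e \<otimes>\<^bsub>BB_group \<Delta>\<^esub> tp \<Delta> T 1 (fst e) q"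
  shows
   "(\<forall>e\<in>edges \<Delta>. \<forall>n::int.
     (\<theta> (bbgen \<Delta> e) = tp \<Delta> T 1 q (fst e) \<otimes>\<^bsub>BB_group \<Delta>\<^esub> bbgen \<Delta> e
          \<otimes>\<^bsub>BB_group \<Delta>\<^esub> inv\<^bsub>BB_group \<Delta>\<^esub> (tp \<Delta> T 1 q (fst e)) \<and>
      \<theta> (bbgen \<Delta> e) = tp \<Delta> T 1 q (fst e) \<otimes>\<^bsub>BB_group \<Delta>\<^esub> (bbgen \<Delta> e [^]\<^bsub>BB_group \<Delta>\<^esub> (2::int))
          \<otimes>\<^bsub>BB_group \<Delta>\<^esub> tp \<Delta> T 1 (snd e) q \<and>
      \<theta> (bbgen \<Delta> e) = tp \<Delta> T 1 q (fst e) \<otimes>\<^bsub>BB_group \<Delta>\<^esub> (bbgen \<Delta> e [^]\<^bsub>BB_group \<Delta>\<^esub> (2::int))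
          \<otimes>\<^bsub>BB_group \<Delta>\<^esub> inv\<^bsub>BB_group \<Delta>\<^esub> (tp \<Delta> T 1 q (snd e))) \<and>
     (\<theta> (bbgen \<Delta> e [^]\<^bsub>BB_group \<Delta>\<^esub> n) = tp \<Delta> T 1 q (fst e) \<otimes>\<^bsub>BB_group \<Delta>\<^esub> (bbgen \<Delta> e [^]\<^bsub>BB_group \<Delta>\<^esub> n)
          \<otimes>\<^bsub>BB_group \<Delta>\<^esub> tp \<Delta> T 1 (fst e) q \<and>
      \<theta> (bbgen \<Delta> e [^]\<^bsub>BB_group \<Delta>\<^esub> n) = tp \<Delta> T 1 q (fst e) \<otimes>\<^bsub>BB_group \<Delta>\<^esub> (bbgen \<Delta> e [^]\<^bsub>BB_group \<Delta>\<^esub> (n + 1))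
          \<otimes>\<^bsub>BB_group \<Delta>\<^esub> tp \<Delta> T 1 (snd e) q \<and>
      \<theta> (bbgen \<Delta> e [^]\<^bsub>BB_group \<Delta>\<^esub> n) = tp \<Delta> T 1 q (fst e) \<otimes>\<^bsub>BB_group \<Delta>\<^esub> (bbgen \<Delta> e [^]\<^bsub>BB_group \<Delta>\<^esub> (n + 1))
          \<otimes>\<^bsub>BB_group \<Delta>\<^esub> inv\<^bsub>BB_group \<Delta>\<^esub> (tp \<Delta> T 1 q (snd e))) \<and>
     (inv_into (carrier (BB_group \<Delta>)) \<theta> (bbgen \<Delta> e) =
          tp \<Delta> T (-1) q (fst e) \<otimes>\<^bsub>BB_group \<Delta>\<^esub> tp \<Delta> T (-1) (snd e) q \<and>
      inv_into (carrier (BB_group \<Delta>)) \<theta> (bbgen \<Delta> e) =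
          tp \<Delta> T (-1) q (fst e) \<otimes>\<^bsub>BB_group \<Delta>\<^esub> bbgen \<Delta> e \<otimes>\<^bsub>BB_group \<Delta>\<^esub> tp \<Delta> T (-1) (fst e) q \<and>
      inv_into (carrier (BB_group \<Delta>)) \<theta> (bbgen \<Delta> e) =
          tp \<Delta> T (-1) q (fst e) \<otimes>\<^bsub>BB_group \<Delta>\<^esub> bbgen \<Delta> e
          \<otimes>\<^bsub>BB_group \<Delta>\<^esub> inv\<^bsub>BB_group \<Delta>\<^esub> (tp \<Delta> T (-1) q (fst e))) \<and>
     (inv_into (carrier (BB_group \<Delta>)) \<theta> (bbgen \<Delta> e [^]\<^bsub>BB_group \<Delta>\<^esub> n) =
          tp \<Delta> T (-1) q (fst e) \<otimes>\<^bsub>BB_group \<Delta>\<^esub> (bbgen \<Delta> e [^]\<^bsub>BB_group \<Delta>\<^esub> n)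
          \<otimes>\<^bsub>BB_group \<Delta>\<^esub> tp \<Delta> T (-1) (fst e) q \<and>
      inv_into (carrier (BB_group \<Delta>)) \<theta> (bbgen \<Delta> e [^]\<^bsub>BB_group \<Delta>\<^esub> n) =
          tp \<Delta> T (-1) q (fst e) \<otimes>\<^bsub>BB_group \<Delta>\<^esub> (bbgen \<Delta> e [^]\<^bsub>BB_group \<Delta>\<^esub> (n - 1))
          \<otimes>\<^bsub>BB_group \<Delta>\<^esub> tp \<Delta> T (-1) (snd e) q \<and>
      inv_into (carrier (BB_group \<Delta>)) \<theta> (bbgen \<Delta> e [^]\<^bsub>BB_group \<Delta>\<^esub> n) =
          tp \<Delta> T (-1) q (fst e) \<otimes>\<^bsub>BB_group \<Delta>\<^esub> (bbgen \<Delta> e [^]\<^bsub>BB_group \<Delta>\<^esub> (n - 1))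
          \<otimes>\<^bsub>BB_group \<Delta>\<^esub> inv\<^bsub>BB_group \<Delta>\<^esub> (tp \<Delta> T (-1) q (snd e))) \<and>
     (\<forall>k::int. aut_pow (BB_group \<Delta>) \<theta> k (bbgen \<Delta> e) =
          tp \<Delta> T k q (fst e) \<otimes>\<^bsub>BB_group \<Delta>\<^esub> (bbgen \<Delta> e [^]\<^bsub>BB_group \<Delta>\<^esub> (k + 1))
          \<otimes>\<^bsub>BB_group \<Delta>\<^esub> tp \<Delta> T k (snd e) q)) \<and>
   (\<forall>es. \<forall>n::int. cpath \<Delta> es \<longrightarrow>
      \<theta> (path_pow \<Delta> n es) =
          tp \<Delta> T 1 q (fst (hd es)) \<otimes>\<^bsub>BB_group \<Delta>\<^esub> path_pow \<Delta> (n + 1) es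
          \<otimes>\<^bsub>BB_group \<Delta>\<^esub> tp \<Delta> T 1 (snd (last es)) q \<and>
      inv_into (carrier (BB_group \<Delta>)) \<theta> (path_pow \<Delta> n es) =
          tp \<Delta> T (-1) q (fst (hd es)) \<otimes>\<^bsub>BB_group \<Delta>\<^esub> path_pow \<Delta> (n - 1) es
          \<otimes>\<^bsub>BB_group \<Delta>\<^esub> tp \<Delta> T (-1) (snd (last es)) q)"
proof -
  interpret bb_aut "BB_group \<Delta>" \<Delta> T q \<theta>
    unfolding bb_aut_def bb_tree_def bb_group_def bb_aut_axioms_def bb_tree_axioms_def
      bb_group_axioms_def
    using assms group_BB_group by simp
  show ?thesis
    using theta_bbgen_eqs theta_bbgen_pow_eqs theta_inv_bbgen_eqs theta_inv_bbgen_pow_eqs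
      aut_pow_bbgen theta_path_pow[OF cpath_walk cpath_start_vertex]
      theta_inv_path_pow[OF cpath_walk cpath_start_vertex]
    by (intro conjI ballI allI impI) meson+
qed

end
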